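(* Let $M$ be a Baire space, $\mathcal{B}(M)$ its Borel $\sigma$-algebra, $\mathcal{I}_1\subseteq\mathcal{B}(M)$ the $\sigma$-ideal of meagre Borel sets, and $\mathcal{Q}^2(\mathcal{B}(M)):=\{\mathfrak{C}\in\mathcal{Q}(\mathcal{B}(M)):\mathfrak{C}\cap\mathcal{I}_1=\emptyset\}$ with the subspace topology. For $\mathfrak{B}\in\mathcal{Q}(\mathcal{T}(M))$ put $\mathfrak{C}(\mathfrak{B}):=\{A\in\mathcal{B}(M): \exists U\in\mathfrak{B} \text{ with } A\,\triangle\,U\in\mathcal{I}_1\}$. Then $\mathfrak{C}(\mathfrak{B})\in\mathcal{Q}^2(\mathcal{B}(M))$, and $\pi_M:\mathcal{Q}(\mathcal{T}(M))\to\mathcal{Q}^2(\mathcal{B}(M))$, $\mathfrak{B}\mapsto\mathfrak{C}(\mathfrak{B})$, is a homeomorphism.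
   Context: $\mathcal{T}(M)$ is the lattice of open subsets of $M$ (join union, meet intersection). A Baire space is a space in which no nonempty open set is meagre (a countable union of nowhere dense sets). A quasipoint in a lattice $\mathbb{L}$ with least element $0$ is a maximal (w.r.t. inclusion) subset $\mathfrak{B}\subseteq\mathbb{L}$ such that $\mathfrak{B}\neq\emptyset$, $0\notin\mathfrak{B}$, and for all $a,b\in\mathfrak{B}$ there is $c\in\mathfrak{B}$ with $c\le a\wedge b$. $\mathcal{Q}(\mathbb{L})$ denotes the set of quasipoints; for $a\in\mathbb{L}$ put $\mathcal{Q}_a(\mathbb{L})=\{\mathfrak{B}\in\mathcal{Q}(\mathbb{L}) : a\in\mathfrak{B}\}$. The Stone spectrum is $\mathcal{Q}(\mathbb{L})$ with the topology having the sets $\mathcal{Q}_a(\mathbb{L})$ as a basis. *)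

theory Defs
  imports "HOL-Analysis.Analysis"
begin

definition nowhere_dense_in :: "'a topology \<Rightarrow> 'a set \<Rightarrow> bool" where
  "nowhere_dense_in X S \<longleftrightarrow> S \<subseteq> topspace X \<and> X interior_of (X closure_of S) = {}"

definition meagre_in :: "'a topology \<Rightarrow> 'a set \<Rightarrow> bool" where
  "meagre_in X S \<longleftrightarrow> (\<exists>\<F>. countable \<F> \<and> (\<forall>N\<in>\<F>. nowhere_dense_in X N) \<and> S = \<Union>\<F>)"

definition Baire_space :: "'a topology \<Rightarrow> bool" where
  "Baire_space X \<longleftrightarrow> (\<forall>U. openin X U \<and> U \<noteq> {} \<longrightarrow> \<not> meagre_in X U)"

definition open_sets :: "'a topology \<Rightarrow> 'a set set" where
  "open_sets X = {U. openin X U}"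

definition borel_sets :: "'a topology \<Rightarrow> 'a set set" where
  "borel_sets X = sigma_sets (topspace X) {U. openin X U}"

definition meagre_borel :: "'a topology \<Rightarrow> 'a set set" where
  "meagre_borel X = {A \<in> borel_sets X. meagre_in X A}"

definition filterbase_in :: "'a set set \<Rightarrow> 'a set set \<Rightarrow> bool" where
  "filterbase_in L B \<longleftrightarrow> B \<subseteq> L \<and> B \<noteq> {} \<and> {} \<notin> B \<and>
     (\<forall>a\<in>B. \<forall>b\<in>B. \<exists>c\<in>B. c \<subseteq> a \<inter> b)"

definition quasipoint :: "'a set set \<Rightarrow> 'a set set \<Rightarrow> bool" where
  "quasipoint L B \<longleftrightarrow> filterbase_in L B \<and> (\<forall>B'. filterbase_in L B' \<and> B \<subseteq> B' \<longrightarrow> B' = B)"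

definition quasipoints :: "'a set set \<Rightarrow> 'a set set set" where
  "quasipoints L = {B. quasipoint L B}"

definition quasipoints_at :: "'a set set \<Rightarrow> 'a set \<Rightarrow> 'a set set set" where
  "quasipoints_at L a = {B \<in> quasipoints L. a \<in> B}"

definition stone_spectrum :: "'a set set \<Rightarrow> 'a set set topology" where
  "stone_spectrum L = topology_generated_by {quasipoints_at L a | a. a \<in> L}"

definition quasipoints2 :: "'a topology \<Rightarrow> 'a set set set" where
  "quasipoints2 X = {C \<in> quasipoints (borel_sets X). C \<inter> meagre_borel X = {}}"

definition pi_map :: "'a topology \<Rightarrow> 'a set set \<Rightarrow> 'a set set" where
  "pi_map X B = {A \<in> borel_sets X. \<exists>U\<in>B. (A - U) \<union> (U - A) \<in> meagre_borel X}"

end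

theory Submission
  imports Defs
begin

text \<open>Every Borel set \<open>A\<close> differs from some open set \<open>U\<close> by a meagre set, and
  since \<open>M\<close> is a Baire space an open set that is meagre is empty. Hence a quasipoint
  \<open>\<CC>\<close> of the Borel sets avoiding the meagre sets contains \<open>A\<close> iff it contains \<open>U\<close>: it
  is determined by its open members, and these form a quasipoint of \<open>\<T>(M)\<close>. Conversely
  \<open>\<CC>(\<BB>)\<close> is such a quasipoint, and its open members are exactly those of \<open>\<BB>\<close>.
  The correspondence \<open>A \<mapsto> U\<close> also shows that \<open>\<pi>\<^sub>M\<close> pulls the basic open set
  \<open>\<Q>\<^sub>A\<close> back to \<open>\<Q>\<^sub>U\<close>, so \<open>\<pi>\<^sub>M\<close> and its inverse \<open>\<CC> \<mapsto> \<CC> \<inter> \<T>(M)\<close>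
  are continuous.\<close>

lemma nowhere_dense_in_subset:
  "nowhere_dense_in X S \<Longrightarrow> T \<subseteq> S \<Longrightarrow> nowhere_dense_in X T"
  unfolding nowhere_dense_in_def
  using interior_of_mono[OF closure_of_mono, of T S X] by blast

lemma nowhere_dense_in_imp_meagre_in: "nowhere_dense_in X S \<Longrightarrow> meagre_in X S"
  unfolding meagre_in_def by (rule exI[of _ "{S}"]) auto

lemma meagre_in_empty [simp]: "meagre_in X {}"
  unfolding meagre_in_def by (rule exI[of _ "{}"]) auto

lemma meagre_in_subset:
  assumes "meagre_in X S" "T \<subseteq> S"
  shows "meagre_in X T"
proof -
  obtain \<F> where \<F>: "countable \<F>" "\<forall>N\<in>\<F>. nowhere_dense_in X N" "S = \<Union>\<F>"
    using assms(1) unfolding meagre_in_def by blast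
  show ?thesis
    unfolding meagre_in_def
    using \<F> assms(2) nowhere_dense_in_subset[of X _ "_ \<inter> T"]
    by (intro exI[of _ "(\<lambda>N. N \<inter> T) ` \<F>"]) auto
qed

lemma meagre_in_UN:
  assumes "countable I" "\<And>i. i \<in> I \<Longrightarrow> meagre_in X (A i)"
  shows "meagre_in X (\<Union>i\<in>I. A i)"
proof -
  obtain \<F> where \<F>: "\<And>i. i \<in> I \<Longrightarrow>
      countable (\<F> i) \<and> (\<forall>N\<in>\<F> i. nowhere_dense_in X N) \<and> A i = \<Union>(\<F> i)"
    using assms(2) unfolding meagre_in_def by metis
  show ?thesis
    unfolding meagre_in_def using \<F> assms(1) by (intro exI[of _ "\<Union>i\<in>I. \<F> i"]) auto
qed

lemma meagre_in_Un: "meagre_in X A \<Longrightarrow> meagre_in X B \<Longrightarrow> meagre_in X (A \<union> B)"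
  using meagre_in_UN[of "{True, False}" X "\<lambda>b. if b then A else B"] by (auto simp: Un_commute)

lemma nowhere_dense_in_closure_of_diff_open:
  assumes "openin X U"
  shows "nowhere_dense_in X (X closure_of U - U)"
proof -
  have "T = {}" if "openin X T" "T \<subseteq> X closure_of U - U" for T
    using that openin_Int_closure_of_eq_empty[OF \<open>openin X T\<close>, of U] by blast
  then have "X interior_of (X closure_of U - U) = {}"
    by (simp add: interior_of_eq_empty)
  moreover have "closedin X (X closure_of U - U)"
    using assms by (simp add: closedin_diff)
  ultimately show ?thesis
    unfolding nowhere_dense_in_def by (simp add: closure_of_closedin closedin_subset)
qed

lemma Baire_space_meagre_openin_empty:
  "Baire_space X \<Longrightarrow> openin X U \<Longrightarrow> meagre_in X U \<Longrightarrow> U = {}"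
  unfolding Baire_space_def by blast

lemma sigma_algebra_borel_sets: "sigma_algebra (topspace X) (borel_sets X)"
  unfolding borel_sets_def by (rule sigma_algebra_sigma_sets) (auto dest: openin_subset)

lemma borel_sets_openin: "openin X U \<Longrightarrow> U \<in> borel_sets X"
  unfolding borel_sets_def by (rule sigma_sets.Basic) simp

lemma borel_sets_subset_topspace: "A \<in> borel_sets X \<Longrightarrow> A \<subseteq> topspace X"
  unfolding borel_sets_def
  by (rule sigma_sets_into_sp[of "{U. openin X U}"]) (auto dest: openin_subset)

lemma borel_sets_Diff: "A \<in> borel_sets X \<Longrightarrow> B \<in> borel_sets X \<Longrightarrow> A - B \<in> borel_sets X"
proof -
  interpret sigma_algebra "topspace X" "borel_sets X" by (rule sigma_algebra_borel_sets)
  show "A \<in> borel_sets X \<Longrightarrow> B \<in> borel_sets X \<Longrightarrow> A - B \<in> borel_sets X" by blast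
qed

lemma borel_sets_Un: "A \<in> borel_sets X \<Longrightarrow> B \<in> borel_sets X \<Longrightarrow> A \<union> B \<in> borel_sets X"
  unfolding borel_sets_def by (rule sigma_sets_Un)

lemma borel_sets_Int: "A \<in> borel_sets X \<Longrightarrow> B \<in> borel_sets X \<Longrightarrow> A \<inter> B \<in> borel_sets X"
  by (metis Diff_Diff_Int borel_sets_Diff)

lemma borel_sets_sym_diff:
  "A \<in> borel_sets X \<Longrightarrow> B \<in> borel_sets X \<Longrightarrow> sym_diff A B \<in> borel_sets X"
  by (simp add: borel_sets_Un borel_sets_Diff)

lemma borel_sets_meagre_sym_diff_openin:
  assumes "A \<in> borel_sets X"
  obtains U where "openin X U" "meagre_in X (sym_diff A U)"
proof -
  have "\<exists>U. openin X U \<and> meagre_in X (sym_diff A U)"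
    using assms unfolding borel_sets_def
  proof (induction rule: sigma_sets.induct)
    case (Basic a)
    then show ?case by (intro exI[of _ a]) simp
  next
    case Empty
    then show ?case by (intro exI[of _ "{}"]) simp
  next
    case (Compl a)
    then obtain U where U: "openin X U" "meagre_in X (sym_diff a U)"
      by blast
    have "a \<subseteq> topspace X"
      using Compl.hyps borel_sets_subset_topspace unfolding borel_sets_def by blast
    moreover have "U \<subseteq> X closure_of U"
      using closure_of_subset openin_subset[OF U(1)] by blast
    ultimately have "sym_diff (topspace X - a) (topspace X - X closure_of U)
        \<subseteq> sym_diff a U \<union> (X closure_of U - U)"
      using closure_of_subset_topspace by fastforce
    moreover have "meagre_in X (sym_diff a U \<union> (X closure_of U - U))"
      using U nowhere_dense_in_closure_of_diff_open nowhere_dense_in_imp_meagre_in meagre_in_Un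
      by blast
    ultimately show ?case
      by (intro exI[of _ "topspace X - X closure_of U"]) (auto intro: meagre_in_subset)
  next
    case (Union a)
    then obtain U where U: "\<And>i. openin X (U i)" "\<And>i. meagre_in X (sym_diff (a i) (U i))"
      by metis
    have "sym_diff (\<Union>i. a i) (\<Union>i. U i) \<subseteq> (\<Union>i. sym_diff (a i) (U i))"
      by blast
    moreover have "meagre_in X (\<Union>i. sym_diff (a i) (U i))"
      by (rule meagre_in_UN) (use U in auto)
    ultimately show ?case
      using U by (intro exI[of _ "\<Union>i. U i"]) (auto intro: meagre_in_subset)
  qed
  then show ?thesis using that by blast
qed

lemma quasipoint_imp_filterbase_in: "quasipoint L B \<Longrightarrow> filterbase_in L B"
  unfolding quasipoint_def by (elim conjE)

lemma quasipoint_maximal: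
  "quasipoint L B \<Longrightarrow> filterbase_in L B' \<Longrightarrow> B \<subseteq> B' \<Longrightarrow> B' = B"
  unfolding quasipoint_def by (elim conjE allE impE) (rule conjI)

lemma quasipointI:
  assumes "filterbase_in L B" "\<And>B'. filterbase_in L B' \<Longrightarrow> B \<subseteq> B' \<Longrightarrow> B' \<subseteq> B"
  shows "quasipoint L B"
  unfolding quasipoint_def using assms by (intro conjI allI impI subset_antisym) auto

lemma filterbase_in_Int_nonempty:
  assumes "filterbase_in L B" "a \<in> B" "b \<in> B"
  shows "a \<inter> b \<noteq> {}"
proof -
  obtain c where "c \<in> B" "c \<subseteq> a \<inter> b"
    using assms unfolding filterbase_in_def by blast
  then show ?thesis using assms(1) unfolding filterbase_in_def by (metis subset_empty)
qed

lemma quasipoint_memI: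
  assumes Int_closed: "\<And>x y. x \<in> L \<Longrightarrow> y \<in> L \<Longrightarrow> x \<inter> y \<in> L"
    and qp: "quasipoint L B" and a: "a \<in> L" and meets: "\<And>b. b \<in> B \<Longrightarrow> a \<inter> b \<noteq> {}"
  shows "a \<in> B"
proof -
  have fb: "filterbase_in L B" using qp by (rule quasipoint_imp_filterbase_in)
  define B' where "B' = insert a (B \<union> (\<inter>) a ` B)"
  have below: "\<exists>b\<in>B. a \<inter> b \<subseteq> x" if "x \<in> B'" for x
    using that fb unfolding B'_def filterbase_in_def by blast
  have "filterbase_in L B'"
    unfolding filterbase_in_def
  proof (intro conjI ballI)
    show "B' \<subseteq> L" "B' \<noteq> {}"
      using fb a Int_closed unfolding filterbase_in_def B'_def by auto
    show "{} \<notin> B'"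
      using fb meets unfolding filterbase_in_def B'_def by blast
    fix x y assume "x \<in> B'" "y \<in> B'"
    then obtain b\<^sub>x b\<^sub>y where "b\<^sub>x \<in> B" "b\<^sub>y \<in> B" "a \<inter> b\<^sub>x \<subseteq> x" "a \<inter> b\<^sub>y \<subseteq> y"
      using below by meson
    moreover obtain c where "c \<in> B" "c \<subseteq> b\<^sub>x \<inter> b\<^sub>y"
      using fb \<open>b\<^sub>x \<in> B\<close> \<open>b\<^sub>y \<in> B\<close> unfolding filterbase_in_def by blast
    ultimately have "a \<inter> c \<subseteq> x \<inter> y"
      by blast
    moreover have "a \<inter> c \<in> B'"
      unfolding B'_def using \<open>c \<in> B\<close> by blast
    ultimately show "\<exists>c\<in>B'. c \<subseteq> x \<inter> y"
      by blast
  qed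
  moreover have "B \<subseteq> B'" unfolding B'_def by blast
  ultimately have "B' = B" using quasipoint_maximal[OF qp] by blast
  then show ?thesis unfolding B'_def by blast
qed

lemma quasipoint_meets_allI:
  assumes fb: "filterbase_in L B"
    and full: "\<And>a. a \<in> L \<Longrightarrow> (\<And>b. b \<in> B \<Longrightarrow> a \<inter> b \<noteq> {}) \<Longrightarrow> a \<in> B"
  shows "quasipoint L B"
proof (rule quasipointI[OF fb], rule subsetI)
  fix B' a assume fb': "filterbase_in L B'" and "B \<subseteq> B'" and "a \<in> B'"
  then have "a \<in> L" unfolding filterbase_in_def by blast
  moreover have "a \<inter> b \<noteq> {}" if "b \<in> B" for b
    using \<open>B \<subseteq> B'\<close> that filterbase_in_Int_nonempty[OF fb' \<open>a \<in> B'\<close>] by blast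
  ultimately show "a \<in> B" by (rule full)
qed

lemma quasipoint_upward:
  assumes "\<And>x y. x \<in> L \<Longrightarrow> y \<in> L \<Longrightarrow> x \<inter> y \<in> L"
    and "quasipoint L B" "a \<in> L" "b \<in> B" "b \<subseteq> a"
  shows "a \<in> B"
proof (rule quasipoint_memI[OF assms(1-3)])
  fix c assume "c \<in> B"
  then have "b \<inter> c \<noteq> {}"
    using filterbase_in_Int_nonempty quasipoint_imp_filterbase_in[OF assms(2)] assms(4) by blast
  with assms(5) show "a \<inter> c \<noteq> {}" by blast
qed

lemma quasipoint_Int:
  assumes "\<And>x y. x \<in> L \<Longrightarrow> y \<in> L \<Longrightarrow> x \<inter> y \<in> L"
    and "quasipoint L B" "a \<in> B" "b \<in> B"
  shows "a \<inter> b \<in> B"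
proof -
  have fb: "filterbase_in L B" using quasipoint_imp_filterbase_in[OF assms(2)] .
  then obtain c where c: "c \<in> B" "c \<subseteq> a \<inter> b"
    using assms(3,4) unfolding filterbase_in_def by blast
  have "a \<in> L" "b \<in> L"
    using assms(3,4) fb unfolding filterbase_in_def by auto
  then have "a \<inter> b \<in> L" by (rule assms(1))
  from quasipoint_upward[OF assms(1,2) this c] show ?thesis .
qed

lemma topspace_stone_spectrum: "topspace (stone_spectrum L) = quasipoints L"
  unfolding stone_spectrum_def topology_generated_by_topspace
proof (intro equalityI subsetI)
  fix B assume B: "B \<in> quasipoints L"
  then obtain b where "b \<in> B" "b \<in> L"
    unfolding quasipoints_def quasipoint_def filterbase_in_def by blast
  with B show "B \<in> \<Union>{quasipoints_at L a | a. a \<in> L}"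
    unfolding quasipoints_at_def by blast
qed (auto simp: quasipoints_at_def)

lemma openin_stone_spectrum_quasipoints_at:
  "a \<in> L \<Longrightarrow> openin (stone_spectrum L) (quasipoints_at L a)"
  unfolding stone_spectrum_def by (rule topology_generated_by_Basis) blast

lemma continuous_map_into_stone_spectrum:
  assumes "f ` topspace X \<subseteq> quasipoints L"
    and "\<And>a. a \<in> L \<Longrightarrow> openin X (f -` quasipoints_at L a \<inter> topspace X)"
  shows "continuous_map X (stone_spectrum L) f"
proof -
  have "\<Union>{quasipoints_at L a | a. a \<in> L} = quasipoints L"
    using topspace_stone_spectrum[of L] unfolding stone_spectrum_def by simp
  with assms show ?thesis
    unfolding stone_spectrum_def by (intro continuous_on_generated_topo) auto
qed

lemma open_sets_Int: "U \<in> open_sets X \<Longrightarrow> V \<in> open_sets X \<Longrightarrow> U \<inter> V \<in> open_sets X"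
  unfolding open_sets_def by auto

lemma pi_map_iff:
  assumes "B \<subseteq> open_sets X"
  shows "A \<in> pi_map X B \<longleftrightarrow> A \<in> borel_sets X \<and> (\<exists>U\<in>B. meagre_in X (sym_diff A U))"
proof -
  have "sym_diff A U \<in> borel_sets X" if "A \<in> borel_sets X" "U \<in> B" for U
  proof -
    have "U \<in> borel_sets X" using that(2) assms borel_sets_openin unfolding open_sets_def by auto
    with that(1) show ?thesis by (rule borel_sets_sym_diff)
  qed
  then show ?thesis unfolding pi_map_def meagre_borel_def by blast
qed

lemma subset_pi_map:
  assumes "B \<subseteq> open_sets X"
  shows "B \<subseteq> pi_map X B"
proof
  fix U assume "U \<in> B"
  then have "U \<in> borel_sets X" using assms borel_sets_openin unfolding open_sets_def by auto
  with \<open>U \<in> B\<close> show "U \<in> pi_map X B" unfolding pi_map_iff[OF assms] by force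
qed

lemma pi_map_in_quasipoints2:
  assumes Baire: "Baire_space X" and qp: "quasipoint (open_sets X) B"
  shows "pi_map X B \<in> quasipoints2 X"
proof -
  let ?C = "pi_map X B"
  have fbB: "filterbase_in (open_sets X) B" using qp by (rule quasipoint_imp_filterbase_in)
  then have B_open: "B \<subseteq> open_sets X" unfolding filterbase_in_def by blast
  note mem = pi_map_iff[OF B_open]
  have avoids: "?C \<inter> meagre_borel X = {}"
  proof (rule ccontr)
    assume "?C \<inter> meagre_borel X \<noteq> {}"
    then obtain A where "A \<in> ?C" "meagre_in X A"
      unfolding meagre_borel_def by blast
    then obtain U where "meagre_in X A" "U \<in> B" "meagre_in X (sym_diff A U)"
      unfolding mem by blast
    moreover have "U \<subseteq> A \<union> sym_diff A U" by blast
    ultimately have "meagre_in X U" using meagre_in_Un meagre_in_subset by blast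
    moreover have "openin X U" using \<open>U \<in> B\<close> B_open unfolding open_sets_def by auto
    ultimately have "U = {}" using Baire_space_meagre_openin_empty[OF Baire] by blast
    with \<open>U \<in> B\<close> fbB show False unfolding filterbase_in_def by blast
  qed
  have Int: "x \<inter> y \<in> ?C" if xy: "x \<in> ?C" "y \<in> ?C" for x y
  proof -
    obtain U V where UV: "U \<in> B" "V \<in> B" "meagre_in X (sym_diff x U)" "meagre_in X (sym_diff y V)"
      using xy unfolding mem by blast
    have "U \<inter> V \<in> B" using quasipoint_Int[OF open_sets_Int qp UV(1,2)] .
    moreover have "sym_diff (x \<inter> y) (U \<inter> V) \<subseteq> sym_diff x U \<union> sym_diff y V" by blast
    then have "meagre_in X (sym_diff (x \<inter> y) (U \<inter> V))"
      using meagre_in_Un[OF UV(3,4)] meagre_in_subset by blast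
    moreover have "x \<inter> y \<in> borel_sets X"
      using xy unfolding mem by (blast intro: borel_sets_Int)
    ultimately show ?thesis unfolding mem by blast
  qed
  have "filterbase_in (borel_sets X) ?C"
    unfolding filterbase_in_def
  proof (intro conjI ballI)
    show "?C \<subseteq> borel_sets X" unfolding pi_map_def by blast
    show "?C \<noteq> {}" using subset_pi_map[OF B_open] fbB unfolding filterbase_in_def by blast
    have "{} \<in> meagre_borel X"
      using borel_sets_openin[OF openin_empty] unfolding meagre_borel_def by simp
    with avoids show "{} \<notin> ?C" by blast
    fix x y assume "x \<in> ?C" "y \<in> ?C"
    with Int[OF this] show "\<exists>c\<in>?C. c \<subseteq> x \<inter> y" by blast
  qed
  then have "quasipoint (borel_sets X) ?C"
  proof (rule quasipoint_meets_allI)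
    fix A assume A: "A \<in> borel_sets X" and meets: "\<And>C. C \<in> ?C \<Longrightarrow> A \<inter> C \<noteq> {}"
    obtain W where W: "openin X W" "meagre_in X (sym_diff A W)"
      using borel_sets_meagre_sym_diff_openin[OF A] .
    define N where "N = sym_diff A W"
    have "W \<in> B"
    proof (rule quasipoint_memI[OF open_sets_Int qp])
      show "W \<in> open_sets X" using W(1) unfolding open_sets_def by simp
      fix V assume "V \<in> B"
      then have "V \<in> borel_sets X" using B_open borel_sets_openin unfolding open_sets_def by auto
      moreover have "N \<in> borel_sets X"
        unfolding N_def using A borel_sets_openin[OF W(1)] by (rule borel_sets_sym_diff)
      ultimately have "V - N \<in> borel_sets X" by (rule borel_sets_Diff)
      moreover have "sym_diff (V - N) V \<subseteq> N" by blast
      then have "meagre_in X (sym_diff (V - N) V)"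
        using W(2) meagre_in_subset unfolding N_def by blast
      ultimately have "V - N \<in> ?C" using \<open>V \<in> B\<close> unfolding mem by blast
      then have "A \<inter> (V - N) \<noteq> {}" by (rule meets)
      moreover have "A \<inter> (V - N) \<subseteq> W \<inter> V" unfolding N_def by blast
      ultimately show "W \<inter> V \<noteq> {}" by blast
    qed
    with A W(2) show "A \<in> ?C" unfolding mem by blast
  qed
  with avoids show ?thesis unfolding quasipoints2_def quasipoints_def by blast
qed

lemma quasipoints2_imp_quasipoint: "C \<in> quasipoints2 X \<Longrightarrow> quasipoint (borel_sets X) C"
  unfolding quasipoints2_def quasipoints_def by blast

lemma quasipoints2_topspace_Diff_meagre:
  assumes C: "C \<in> quasipoints2 X" and N: "N \<in> meagre_borel X"
  shows "topspace X - N \<in> C"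
proof -
  have qp: "quasipoint (borel_sets X) C" using C by (rule quasipoints2_imp_quasipoint)
  show ?thesis
  proof (rule quasipoint_memI[OF borel_sets_Int qp])
    show "topspace X - N \<in> borel_sets X"
      using borel_sets_openin[OF openin_topspace] N unfolding meagre_borel_def
      by (blast intro: borel_sets_Diff)
    fix c assume "c \<in> C"
    then have c: "c \<in> borel_sets X"
      using quasipoint_imp_filterbase_in[OF qp] unfolding filterbase_in_def by blast
    show "(topspace X - N) \<inter> c \<noteq> {}"
    proof
      assume "(topspace X - N) \<inter> c = {}"
      then have "c \<subseteq> N" using borel_sets_subset_topspace[OF c] by blast
      then have "c \<in> meagre_borel X"
        using c N meagre_in_subset unfolding meagre_borel_def by blast
      with \<open>c \<in> C\<close> C show False unfolding quasipoints2_def by blast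
    qed
  qed
qed

lemma quasipoints2_meagre_sym_diff:
  assumes C: "C \<in> quasipoints2 X" and "A \<in> C" "A' \<in> borel_sets X"
    and "meagre_in X (sym_diff A A')"
  shows "A' \<in> C"
proof -
  have qp: "quasipoint (borel_sets X) C" using C by (rule quasipoints2_imp_quasipoint)
  have "A \<in> borel_sets X"
    using quasipoint_imp_filterbase_in[OF qp] \<open>A \<in> C\<close> unfolding filterbase_in_def by blast
  then have "sym_diff A A' \<in> meagre_borel X"
    using assms(3,4) borel_sets_sym_diff unfolding meagre_borel_def by blast
  then have "topspace X - sym_diff A A' \<in> C"
    using quasipoints2_topspace_Diff_meagre[OF C] by blast
  with quasipoint_Int[OF borel_sets_Int qp \<open>A \<in> C\<close>]
  have "A \<inter> (topspace X - sym_diff A A') \<in> C" by blast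
  moreover have "A \<inter> (topspace X - sym_diff A A') \<subseteq> A'" by blast
  ultimately show ?thesis using quasipoint_upward[OF borel_sets_Int qp assms(3)] by blast
qed

lemma quasipoint_Int_open_sets:
  assumes Baire: "Baire_space X" and C: "C \<in> quasipoints2 X"
  shows "quasipoint (open_sets X) (C \<inter> open_sets X)"
proof -
  have qp: "quasipoint (borel_sets X) C" using C by (rule quasipoints2_imp_quasipoint)
  have fbC: "filterbase_in (borel_sets X) C" using qp by (rule quasipoint_imp_filterbase_in)
  then obtain c where "c \<in> C" "c \<subseteq> topspace X"
    unfolding filterbase_in_def using borel_sets_subset_topspace by blast
  then have "topspace X \<in> C"
    using quasipoint_upward[OF borel_sets_Int qp borel_sets_openin[OF openin_topspace]] by blast
  have "filterbase_in (open_sets X) (C \<inter> open_sets X)"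
    unfolding filterbase_in_def
  proof (intro conjI ballI)
    show "C \<inter> open_sets X \<subseteq> open_sets X" by blast
    show "C \<inter> open_sets X \<noteq> {}"
      using \<open>topspace X \<in> C\<close> unfolding open_sets_def by blast
    show "{} \<notin> C \<inter> open_sets X" using fbC unfolding filterbase_in_def by blast
    fix x y assume xy: "x \<in> C \<inter> open_sets X" "y \<in> C \<inter> open_sets X"
    then have "x \<inter> y \<in> C \<inter> open_sets X"
      using quasipoint_Int[OF borel_sets_Int qp] open_sets_Int by blast
    then show "\<exists>c\<in>C \<inter> open_sets X. c \<subseteq> x \<inter> y" by blast
  qed
  then show ?thesis
  proof (rule quasipoint_meets_allI)
    fix U assume U: "U \<in> open_sets X" and meets: "\<And>V. V \<in> C \<inter> open_sets X \<Longrightarrow> U \<inter> V \<noteq> {}"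
    have "U \<in> C"
    proof (rule quasipoint_memI[OF borel_sets_Int qp])
      show "U \<in> borel_sets X" using U borel_sets_openin unfolding open_sets_def by auto
      fix c assume "c \<in> C"
      then have c: "c \<in> borel_sets X" using fbC unfolding filterbase_in_def by blast
      obtain W where W: "openin X W" "meagre_in X (sym_diff c W)"
        using borel_sets_meagre_sym_diff_openin[OF c] .
      have "W \<in> C"
        using quasipoints2_meagre_sym_diff[OF C \<open>c \<in> C\<close> borel_sets_openin[OF W(1)] W(2)] .
      with W(1) have "U \<inter> W \<noteq> {}" using meets unfolding open_sets_def by blast
      show "U \<inter> c \<noteq> {}"
      proof
        assume "U \<inter> c = {}"
        then have "U \<inter> W \<subseteq> sym_diff c W" by blast
        then have "meagre_in X (U \<inter> W)" using W(2) meagre_in_subset by blast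
        moreover have "openin X (U \<inter> W)" using U W(1) unfolding open_sets_def by auto
        ultimately show False
          using Baire_space_meagre_openin_empty[OF Baire] \<open>U \<inter> W \<noteq> {}\<close> by blast
      qed
    qed
    with U show "U \<in> C \<inter> open_sets X" by blast
  qed
qed

lemma pi_map_of_Int_open_sets:
  assumes C: "C \<in> quasipoints2 X"
  shows "pi_map X (C \<inter> open_sets X) = C"
proof (intro equalityI subsetI)
  fix A assume "A \<in> pi_map X (C \<inter> open_sets X)"
  then obtain U where "A \<in> borel_sets X" "U \<in> C" "meagre_in X (sym_diff U A)"
    unfolding pi_map_iff[OF Int_lower2] by (auto simp: Un_commute)
  then show "A \<in> C" using quasipoints2_meagre_sym_diff[OF C] by blast
next
  fix A assume "A \<in> C"
  then have A: "A \<in> borel_sets X"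
    using quasipoints2_imp_quasipoint[OF C, THEN quasipoint_imp_filterbase_in]
    unfolding filterbase_in_def by blast
  obtain W where W: "openin X W" "meagre_in X (sym_diff A W)"
    using borel_sets_meagre_sym_diff_openin[OF A] .
  have "W \<in> C"
    using quasipoints2_meagre_sym_diff[OF C \<open>A \<in> C\<close> borel_sets_openin[OF W(1)] W(2)] .
  with W(1) have "W \<in> C \<inter> open_sets X" unfolding open_sets_def by blast
  with A W(2) show "A \<in> pi_map X (C \<inter> open_sets X)"
    unfolding pi_map_iff[OF Int_lower2] by blast
qed

lemma pi_map_Int_open_sets:
  assumes Baire: "Baire_space X" and qp: "quasipoint (open_sets X) B"
  shows "pi_map X B \<inter> open_sets X = B"
proof (intro equalityI subsetI)
  have B_open: "B \<subseteq> open_sets X"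
    using quasipoint_imp_filterbase_in[OF qp] unfolding filterbase_in_def by blast
  have fbC: "filterbase_in (borel_sets X) (pi_map X B)"
    using pi_map_in_quasipoints2[OF Baire qp]
    by (intro quasipoint_imp_filterbase_in quasipoints2_imp_quasipoint)
  fix U assume U: "U \<in> pi_map X B \<inter> open_sets X"
  show "U \<in> B"
  proof (rule quasipoint_memI[OF open_sets_Int qp])
    show "U \<in> open_sets X" using U by blast
    fix V assume "V \<in> B"
    then have "V \<in> pi_map X B" using subset_pi_map[OF B_open] by blast
    with U show "U \<inter> V \<noteq> {}" using filterbase_in_Int_nonempty[OF fbC] by blast
  qed
next
  fix U assume "U \<in> B"
  moreover have "B \<subseteq> open_sets X"
    using quasipoint_imp_filterbase_in[OF qp] unfolding filterbase_in_def by blast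
  ultimately show "U \<in> pi_map X B \<inter> open_sets X" using subset_pi_map by blast
qed

lemma topspace_stone_spectrum_quasipoints2:
  "topspace (subtopology (stone_spectrum (borel_sets X)) (quasipoints2 X)) = quasipoints2 X"
  unfolding topspace_subtopology topspace_stone_spectrum quasipoints2_def by blast

lemma continuous_map_pi_map:
  assumes Baire: "Baire_space X"
  shows "continuous_map (stone_spectrum (open_sets X))
    (subtopology (stone_spectrum (borel_sets X)) (quasipoints2 X)) (pi_map X)"
proof -
  have into: "pi_map X B \<in> quasipoints2 X" if "B \<in> topspace (stone_spectrum (open_sets X))" for B
    using that pi_map_in_quasipoints2[OF Baire]
    unfolding topspace_stone_spectrum quasipoints_def by blast
  have "continuous_map (stone_spectrum (open_sets X)) (stone_spectrum (borel_sets X)) (pi_map X)"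
  proof (rule continuous_map_into_stone_spectrum)
    show "pi_map X ` topspace (stone_spectrum (open_sets X)) \<subseteq> quasipoints (borel_sets X)"
      using into unfolding quasipoints2_def by blast
    fix A assume A: "A \<in> borel_sets X"
    obtain W where W: "openin X W" "meagre_in X (sym_diff A W)"
      using borel_sets_meagre_sym_diff_openin[OF A] .
    have "A \<in> pi_map X B \<longleftrightarrow> W \<in> B" if "B \<in> quasipoints (open_sets X)" for B
    proof -
      have qp: "quasipoint (open_sets X) B" using that unfolding quasipoints_def by blast
      have C: "pi_map X B \<in> quasipoints2 X" using pi_map_in_quasipoints2[OF Baire qp] .
      have "A \<in> pi_map X B \<longleftrightarrow> W \<in> pi_map X B"
        using quasipoints2_meagre_sym_diff[OF C _ borel_sets_openin[OF W(1)] W(2)]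
          quasipoints2_meagre_sym_diff[OF C _ A] W(2) by (auto simp: Un_commute)
      also have "\<dots> \<longleftrightarrow> W \<in> B"
        using pi_map_Int_open_sets[OF Baire qp] W(1) unfolding open_sets_def by blast
      finally show ?thesis .
    qed
    then have "pi_map X -` quasipoints_at (borel_sets X) A \<inter> topspace (stone_spectrum (open_sets X))
        = quasipoints_at (open_sets X) W"
      using into unfolding topspace_stone_spectrum quasipoints_at_def quasipoints2_def by blast
    moreover have "W \<in> open_sets X" using W(1) unfolding open_sets_def by simp
    ultimately show "openin (stone_spectrum (open_sets X))
        (pi_map X -` quasipoints_at (borel_sets X) A \<inter> topspace (stone_spectrum (open_sets X)))"
      using openin_stone_spectrum_quasipoints_at by metis
  qed
  with into show ?thesis by (simp add: continuous_map_in_subtopology)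
qed

lemma continuous_map_Int_open_sets:
  assumes Baire: "Baire_space X"
  shows "continuous_map (subtopology (stone_spectrum (borel_sets X)) (quasipoints2 X))
    (stone_spectrum (open_sets X)) (\<lambda>C. C \<inter> open_sets X)"
proof (rule continuous_map_into_stone_spectrum)
  let ?Y = "subtopology (stone_spectrum (borel_sets X)) (quasipoints2 X)"
  show "(\<lambda>C. C \<inter> open_sets X) ` topspace ?Y \<subseteq> quasipoints (open_sets X)"
    using quasipoint_Int_open_sets[OF Baire]
    unfolding topspace_stone_spectrum_quasipoints2 quasipoints_def by blast
  fix U assume U: "U \<in> open_sets X"
  have "(\<lambda>C. C \<inter> open_sets X) -` quasipoints_at (open_sets X) U \<inter> topspace ?Y
      = quasipoints_at (borel_sets X) U \<inter> quasipoints2 X"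
    using U quasipoint_Int_open_sets[OF Baire]
    unfolding topspace_stone_spectrum_quasipoints2
    unfolding quasipoints_at_def quasipoints_def quasipoints2_def by blast
  moreover have "U \<in> borel_sets X" using U borel_sets_openin unfolding open_sets_def by auto
  ultimately show "openin ?Y ((\<lambda>C. C \<inter> open_sets X) -` quasipoints_at (open_sets X) U \<inter> topspace ?Y)"
    unfolding openin_subtopology using openin_stone_spectrum_quasipoints_at by blast
qed

theorem proposition3p43:
  fixes M :: "'a topology"
  assumes "Baire_space M"
  shows "(\<forall>B \<in> quasipoints (open_sets M). pi_map M B \<in> quasipoints2 M)
    \<and> homeomorphic_map (stone_spectrum (open_sets M))
         (subtopology (stone_spectrum (borel_sets M)) (quasipoints2 M)) (pi_map M)"
proof
  show "\<forall>B \<in> quasipoints (open_sets M). pi_map M B \<in> quasipoints2 M"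
    using pi_map_in_quasipoints2[OF assms] unfolding quasipoints_def by blast
  have "homeomorphic_maps (stone_spectrum (open_sets M))
      (subtopology (stone_spectrum (borel_sets M)) (quasipoints2 M))
      (pi_map M) (\<lambda>C. C \<inter> open_sets M)"
    unfolding homeomorphic_maps_def topspace_stone_spectrum topspace_stone_spectrum_quasipoints2
    using continuous_map_pi_map[OF assms] continuous_map_Int_open_sets[OF assms]
      pi_map_Int_open_sets[OF assms] pi_map_of_Int_open_sets
    unfolding quasipoints_def by blast
  then show "homeomorphic_map (stone_spectrum (open_sets M))
      (subtopology (stone_spectrum (borel_sets M)) (quasipoints2 M)) (pi_map M)"
    unfolding homeomorphic_map_maps by blast
qed

end
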